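(* Let $\mathcal X$ be a Banach space, $\mathcal U\subset\mathcal X$ open, $\mathcal E:\mathcal U\to\mathbb R$ a $C^2$ function and $x_\infty\in\mathcal U$ with $\mathcal E'(x_\infty)=0$. Suppose $\mathcal E$ is Morse–Bott at $x_\infty$, so that $\mathcal U\cap\mathrm{Crit}\,\mathcal E$ is a relatively open smooth submanifold of $\mathcal X$ and $K:=\mathrm{Ker}\,\mathcal E''(x_\infty)=T_{x_\infty}\mathrm{Crit}\,\mathcal E$. Assume that $K$ has a closed complement $\mathcal X_0\subset\mathcal X$ and that $\mathrm{Ran}\,\mathcal E''(x_\infty)\subset\mathcal X^*$ is closed. Then there are constants $Z\in(0,\infty)$ and $\sigma\in(0,1]$ such that every $x\in\mathcal U$ with $\|x-x_\infty\|_{\mathcal X}<\sigma$ satisfies $$\|\mathcal E'(x)\|_{\mathcal X^*}\geq Z\,|\mathcal E(x)-\mathcal E(x_\infty)|^{1/2}.$$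
   Context: $\mathrm{Crit}\,\mathcal E=\{x:\mathcal E'(x)=0\}$; $\mathcal E''(x):\mathcal X\to\mathcal X^*$ is the Hessian. $\mathcal E$ is Morse–Bott at $x_0$ if some open neighborhood $\mathcal U$ of $x_0$ has $\mathcal U\cap\mathrm{Crit}\,\mathcal E$ a relatively open smooth submanifold and $T_{x_0}\mathrm{Crit}\,\mathcal E=\mathrm{Ker}\,\mathcal E''(x_0)$. *)

theory Defs
  imports "HOL-Analysis.Analysis"
begin

text \<open>A k-linear map from X^k to Y is represented as a function on lists; only its
  values on lists of length k matter.\<close>

definition mlin_bounded :: "nat \<Rightarrow> ('a::real_normed_vector list \<Rightarrow> 'b::real_normed_vector) \<Rightarrow> bool" where
  "mlin_bounded k m \<longleftrightarrow>
     (\<forall>i<k. \<forall>hs. length hs = k \<longrightarrow> linear (\<lambda>v. m (hs[i := v]))) \<and>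
     (\<exists>C. \<forall>hs. length hs = k \<longrightarrow> norm (m hs) \<le> C * prod_list (map norm hs))"

definition mlin_norm :: "nat \<Rightarrow> ('a::real_normed_vector list \<Rightarrow> 'b::real_normed_vector) \<Rightarrow> real" where
  "mlin_norm k m = (SUP hs \<in> {hs. length hs = k \<and> (\<forall>h\<in>set hs. norm h \<le> 1)}. norm (m hs))"

definition Ck_on :: "nat \<Rightarrow> 'a::real_normed_vector set \<Rightarrow> ('a \<Rightarrow> 'b::real_normed_vector) \<Rightarrow> bool" where
  "Ck_on k U f \<longleftrightarrow>
     (\<exists>D :: nat \<Rightarrow> 'a \<Rightarrow> 'a list \<Rightarrow> 'b.
        (\<forall>x\<in>U. D 0 x [] = f x) \<and>
        (\<forall>j\<le>k. \<forall>x\<in>U. mlin_bounded j (D j x)) \<and>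
        (\<forall>j<k. \<forall>x\<in>U.
           ((\<lambda>y. mlin_norm j (\<lambda>hs. D j y hs - D j x hs - D (Suc j) x ((y - x) # hs)) / norm (y - x))
              \<longlongrightarrow> 0) (at x within U)) \<and>
        (\<forall>j\<le>k. \<forall>x\<in>U. ((\<lambda>y. mlin_norm j (\<lambda>hs. D j y hs - D j x hs)) \<longlongrightarrow> 0) (at x within U)))"

definition smooth_on :: "'a::real_normed_vector set \<Rightarrow> ('a \<Rightarrow> 'b::real_normed_vector) \<Rightarrow> bool" where
  "smooth_on U f \<longleftrightarrow> (\<forall>k. Ck_on k U f)"

definition smooth_submanifold :: "'a::banach set \<Rightarrow> bool" where
  "smooth_submanifold M \<longleftrightarrow>
     (\<forall>p\<in>M. \<exists>V W (\<phi>::'a \<Rightarrow> 'a) \<psi> F.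
        open V \<and> p \<in> V \<and> open W \<and> closed F \<and> subspace F \<and>
        \<phi> ` V = W \<and> (\<forall>x\<in>V. \<psi> (\<phi> x) = x) \<and> (\<forall>y\<in>W. \<phi> (\<psi> y) = y) \<and>
        smooth_on V \<phi> \<and> smooth_on W \<psi> \<and> \<phi> ` (V \<inter> M) = W \<inter> F)"

definition tangent_space :: "'a::banach set \<Rightarrow> 'a \<Rightarrow> 'a set" where
  "tangent_space M p =
     {v. \<exists>(\<gamma>::real \<Rightarrow> 'a) \<epsilon>. \<epsilon> > 0 \<and> Ck_on 1 {-\<epsilon><..<\<epsilon>} \<gamma> \<and> \<gamma> ` {-\<epsilon><..<\<epsilon>} \<subseteq> M \<and>
         \<gamma> 0 = p \<and> (\<gamma> has_vector_derivative v) (at 0)}"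

definition Crit :: "'a::real_normed_vector set \<Rightarrow> ('a \<Rightarrow> ('a \<Rightarrow>\<^sub>L real)) \<Rightarrow> 'a set" where
  "Crit U E' = {x \<in> U. E' x = 0}"

definition morse_bott_at ::
  "'a::banach set \<Rightarrow> ('a \<Rightarrow> ('a \<Rightarrow>\<^sub>L real)) \<Rightarrow> ('a \<Rightarrow> ('a \<Rightarrow>\<^sub>L ('a \<Rightarrow>\<^sub>L real))) \<Rightarrow> 'a \<Rightarrow> bool" where
  "morse_bott_at U E' E'' x0 \<longleftrightarrow>
     (\<exists>V. open V \<and> x0 \<in> V \<and> V \<subseteq> U \<and>
        smooth_submanifold (V \<inter> Crit U E') \<and>
        tangent_space (V \<inter> Crit U E') x0 = {v. E'' x0 v = 0})"

end

theory Submission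
  imports Defs
begin

text \<open>
  In a chart straightening the critical manifold, every x near x_inf is, up to an error small
  compared with v, the sum of a critical point q and a vector v of the complement X0 of
  Ker E''(x_inf); this is where T Crit = Ker E'' enters. Being injective with closed range on X0,
  E''(x_inf) is bounded below there, so the gradient at x is at least of order norm v. On the other
  hand E is constant on the critical manifold and E'(q) = 0, so the energy gap E(x) - E(x_inf) is
  at most of order (norm v)^2. Comparing the two gives the exponent 1/2.
\<close>

section \<open>Operators with closed range\<close>

lemma halving_residuals:
  fixes T :: "'a::real_normed_vector \<Rightarrow> 'b::real_normed_vector"
  assumes T: "linear T" and S: "subspace S" and a: "a \<ge> 0"
    and approx: "\<And>y. y \<in> T ` S \<Longrightarrow> \<exists>x\<in>S. norm x \<le> a * norm y \<and> norm (y - T x) \<le> norm y / 2"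
    and y: "y \<in> T ` S"
  obtains x where "\<And>k. x k \<in> S" "\<And>k. norm (x k) \<le> a * ((1/2)^k * norm y)" "(\<lambda>k. T (x k)) sums y"
proof -
  obtain g where g: "\<And>y. y \<in> T ` S \<Longrightarrow> g y \<in> S \<and> norm (g y) \<le> a * norm y \<and> norm (y - T (g y)) \<le> norm y / 2"
    using approx by metis
  define r where "r = rec_nat y (\<lambda>_ r. r - T (g r))"
  have r0: "r 0 = y" and r_Suc: "\<And>k. r (Suc k) = r k - T (g (r k))" by (simp_all add: r_def)
  have r: "r k \<in> T ` S \<and> norm (r k) \<le> (1/2)^k * norm y" for k
  proof (induction k)
    case 0 then show ?case using y r0 by simp
  next
    case (Suc k)
    then obtain s where s: "s \<in> S" "r k = T s" by auto
    have "r (Suc k) = T (s - g (r k))" using s r_Suc linear_diff[OF T] by simp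
    moreover have "s - g (r k) \<in> S" using s g Suc S by (simp add: subspace_diff)
    ultimately have "r (Suc k) \<in> T ` S" by blast
    moreover have "norm (r (Suc k)) \<le> norm (r k) / 2" using g Suc r_Suc by simp
    ultimately show ?case using Suc by simp
  qed
  show ?thesis
  proof (rule that[of "\<lambda>k. g (r k)"])
    show "g (r k) \<in> S" for k using g r by blast
    show "norm (g (r k)) \<le> a * ((1/2)^k * norm y)" for k
    proof -
      have "norm (g (r k)) \<le> a * norm (r k)" using g r by blast
      also have "\<dots> \<le> a * ((1/2)^k * norm y)" using r a by (simp add: mult_left_mono)
      finally show ?thesis .
    qed
    have "(\<lambda>k. (1/2)^k * norm y) \<longlonglongrightarrow> 0 * norm y"
      by (intro tendsto_mult tendsto_const LIMSEQ_power_zero) simp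
    then have "(\<lambda>k. (1/2)^k * norm y) \<longlonglongrightarrow> 0" by simp
    moreover have "\<forall>\<^sub>F k in sequentially. norm (r k) \<le> (1/2)^k * norm y"
      using r by (simp add: always_eventually)
    ultimately have "r \<longlonglongrightarrow> 0" by (rule Lim_null_comparison[rotated])
    then have "(\<lambda>k. r k - r (Suc k)) sums (r 0 - 0)" by (rule telescope_sums')
    then show "(\<lambda>k. T (g (r k))) sums y" using r0 r_Suc by simp
  qed
qed

lemma exact_preimage_of_approximate_preimages:
  fixes T :: "'a::banach \<Rightarrow> 'b::real_normed_vector"
  assumes T: "bounded_linear T" and S: "closed S" "subspace S" and a: "a \<ge> 0"
    and approx: "\<And>y. y \<in> T ` S \<Longrightarrow> \<exists>x\<in>S. norm x \<le> a * norm y \<and> norm (y - T x) \<le> norm y / 2"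
    and y: "y \<in> T ` S"
  shows "\<exists>x\<in>S. norm x \<le> 2 * a * norm y \<and> T x = y"
proof -
  obtain x where x_S: "\<And>k. x k \<in> S" and norm_x: "\<And>k. norm (x k) \<le> a * ((1/2)^k * norm y)"
    and sums_y: "(\<lambda>k. T (x k)) sums y"
    using halving_residuals[OF bounded_linear.linear[OF T] S(2) a approx y] by blast
  have geom: "summable (\<lambda>k. a * ((1/2)^k * norm y))"
    by (intro summable_mult summable_mult2) simp
  have sx: "summable x" by (rule summable_comparison_test'[OF geom norm_x])
  have snx: "summable (\<lambda>k. norm (x k))" by (rule summable_comparison_test'[OF geom]) (use norm_x in simp)
  have "(\<lambda>n. \<Sum>k<n. x k) \<longlonglongrightarrow> suminf x" using sx summable_LIMSEQ by blast
  moreover have "\<forall>\<^sub>F n in sequentially. (\<Sum>k<n. x k) \<in> S" using x_S S(2) by (simp add: subspace_sum)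
  ultimately have "suminf x \<in> S" using S(1) by (metis Lim_in_closed_set trivial_limit_sequentially)
  moreover have "T (suminf x) = y"
    using bounded_linear.sums[OF T summable_sums[OF sx]] sums_y by (rule sums_unique2)
  moreover have "norm (suminf x) \<le> 2 * a * norm y"
  proof -
    have "norm (suminf x) \<le> (\<Sum>k. norm (x k))" by (rule summable_norm[OF snx])
    also have "\<dots> \<le> (\<Sum>k. a * ((1/2)^k * norm y))" by (rule suminf_le[OF norm_x snx geom])
    also have "\<dots> = a * ((\<Sum>k. (1/2::real)^k) * norm y)"
      by (simp add: suminf_mult suminf_mult2 summable_mult2)
    also have "\<dots> = 2 * a * norm y" by (simp add: suminf_geometric)
    finally show ?thesis .
  qed
  ultimately show ?thesis by blast
qed

lemma closed_range_closure_image_cball_has_interior: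
  fixes T :: "'a::real_normed_vector \<Rightarrow> 'b::banach"
  assumes T: "linear T" and S: "subspace S" and R: "closed (T ` S)"
  obtains n :: nat and y1 r where "r > 0" "y1 \<in> T ` S"
    "ball y1 r \<inter> T ` S \<subseteq> closure (T ` (S \<inter> cball 0 (real n)))"
proof -
  define C where "C n = T ` S \<inter> closure (T ` (S \<inter> cball 0 (real n)))" for n :: nat
  let ?X = "top_of_set (T ` S)"
  have complete: "completely_metrizable_space ?X"
    by (rule completely_metrizable_space_closedin[OF completely_metrizable_space_euclidean])
       (use R closed_closedin in auto)
  have cover: "\<Union>(range C) = T ` S"
  proof
    show "T ` S \<subseteq> \<Union>(range C)"
    proof
      fix y assume "y \<in> T ` S"
      then obtain s where s: "s \<in> S" "y = T s" by auto
      obtain n :: nat where "norm s \<le> real n" using real_arch_simple by blast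
      then have "y \<in> closure (T ` (S \<inter> cball 0 (real n)))" using s closure_subset by fastforce
      then show "y \<in> \<Union>(range C)" unfolding C_def using \<open>y \<in> T ` S\<close> by blast
    qed
  qed (auto simp: C_def)
  have "\<exists>n. ?X interior_of C n \<noteq> {}"
  proof (rule ccontr)
    assume "\<not> ?thesis"
    then have "?X interior_of \<Union>(range C) = {}"
      using complete by (intro Baire_category_alt) (auto simp: C_def closedin_closed_Int)
    moreover have "?X interior_of \<Union>(range C) = T ` S"
      unfolding cover by (rule interior_of_openin) (metis openin_topspace topspace_euclidean_subtopology)
    moreover have "0 \<in> T ` S" using S T by (metis image_eqI linear_0 subspace_0)
    ultimately show False by auto
  qed
  then obtain n y1 where "y1 \<in> ?X interior_of C n" by blast
  then obtain G where G: "open G" "y1 \<in> G \<inter> T ` S" "G \<inter> T ` S \<subseteq> C n"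
    by (auto simp: interior_of_def openin_open)
  then obtain r where r: "r > 0" "ball y1 r \<subseteq> G" using open_contains_ball by blast
  then have "ball y1 r \<inter> T ` S \<subseteq> C n" using G by blast
  then show ?thesis using that[of r y1 n] r G(2) unfolding C_def by blast
qed

lemma approximate_preimage_of_small_vector:
  fixes T :: "'a::real_normed_vector \<Rightarrow> 'b::real_normed_vector"
  assumes T: "linear T" and S: "subspace S" and y1: "y1 \<in> T ` S"
    and ball: "ball y1 r \<inter> T ` S \<subseteq> closure (T ` (S \<inter> cball 0 n))"
    and y: "y \<in> T ` S" "norm y < r" and "\<delta> > 0"
  shows "\<exists>x\<in>S. norm x \<le> 2 * n \<and> norm (y - T x) < \<delta>"
proof -
  have approach: "\<exists>s\<in>S. norm s \<le> n \<and> dist (T s) w < \<delta> / 2" if "w \<in> ball y1 r \<inter> T ` S" for w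
  proof -
    have "w \<in> closure (T ` (S \<inter> cball 0 n))" using ball that by blast
    then obtain w' where "w' \<in> T ` (S \<inter> cball 0 n)" "dist w' w < \<delta> / 2"
      using closure_approachable \<open>\<delta> > 0\<close> by (meson half_gt_zero)
    then show ?thesis by auto
  qed
  have "y1 + y \<in> ball y1 r \<inter> T ` S"
    using y1 y S T by (simp add: dist_norm subspace_add linear_subspace_image)
  then obtain s1 where s1: "s1 \<in> S" "norm s1 \<le> n" "dist (T s1) (y1 + y) < \<delta> / 2"
    using approach by blast
  have "r > 0" using y(2) norm_ge_zero[of y] by linarith
  then have "y1 \<in> ball y1 r \<inter> T ` S" using y1 by simp
  then obtain s2 where s2: "s2 \<in> S" "norm s2 \<le> n" "dist (T s2) y1 < \<delta> / 2"
    using approach by blast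
  have "y - T (s1 - s2) = (T s2 - y1) - (T s1 - (y1 + y))" by (simp add: linear_diff[OF T] algebra_simps)
  then have "norm (y - T (s1 - s2)) \<le> norm (T s2 - y1) + norm (T s1 - (y1 + y))"
    by (metis norm_triangle_ineq4)
  moreover have "norm (s1 - s2) \<le> 2 * n" using norm_triangle_ineq4[of s1 s2] s1 s2 by linarith
  moreover have "s1 - s2 \<in> S" using s1 s2 S by (simp add: subspace_diff)
  ultimately show ?thesis using s1(3) s2(3) by (auto simp: dist_norm)
qed

lemma closed_range_approximate_preimages:
  fixes T :: "'a::real_normed_vector \<Rightarrow> 'b::banach"
  assumes T: "linear T" and S: "subspace S" and R: "closed (T ` S)"
  shows "\<exists>a\<ge>0. \<forall>y\<in>T ` S. \<exists>x\<in>S. norm x \<le> a * norm y \<and> norm (y - T x) \<le> norm y / 2"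
proof -
  obtain n :: nat and y1 r where r: "r > 0" and y1: "y1 \<in> T ` S"
    and ball: "ball y1 r \<inter> T ` S \<subseteq> closure (T ` (S \<inter> cball 0 (real n)))"
    by (rule closed_range_closure_image_cball_has_interior[OF assms])
  have image_subspace: "subspace (T ` S)" using T S by (rule linear_subspace_image)
  show ?thesis
  proof (intro exI[of _ "4 * real n / r"] conjI ballI)
    show "0 \<le> 4 * real n / r" using r by simp
    fix y assume y: "y \<in> T ` S"
    show "\<exists>x\<in>S. norm x \<le> 4 * real n / r * norm y \<and> norm (y - T x) \<le> norm y / 2"
    proof (cases "y = 0")
      case True then show ?thesis using S by (intro bexI[of _ 0]) (auto simp: subspace_0 linear_0[OF T])
    next
      case False
      define t where "t = 2 * norm y / r"
      have t: "t > 0" using False r by (simp add: t_def)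
      have "(1/t) *\<^sub>R y \<in> T ` S" using y image_subspace by (simp add: subspace_scale)
      moreover have "norm ((1/t) *\<^sub>R y) < r" using t False r by (simp add: t_def)
      ultimately obtain x where x: "x \<in> S" "norm x \<le> 2 * real n" "norm ((1/t) *\<^sub>R y - T x) < r/4"
        using approximate_preimage_of_small_vector[OF T S y1 ball] r by (meson divide_pos_pos zero_less_numeral)
      have "norm (t *\<^sub>R x) \<le> t * (2 * real n)" using x t by (simp add: mult_left_mono)
      also have "\<dots> = 4 * real n / r * norm y" by (simp add: t_def)
      finally have "norm (t *\<^sub>R x) \<le> 4 * real n / r * norm y" .
      moreover have "y - T (t *\<^sub>R x) = t *\<^sub>R ((1/t) *\<^sub>R y - T x)"
        using t by (simp add: linear_scale[OF T] algebra_simps)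
      then have "norm (y - T (t *\<^sub>R x)) \<le> t * (r/4)" using x t by simp
      then have "norm (y - T (t *\<^sub>R x)) \<le> norm y / 2" using r by (simp add: t_def)
      ultimately show ?thesis using x S by (intro bexI[of _ "t *\<^sub>R x"]) (auto simp: subspace_scale)
    qed
  qed
qed

lemma closed_range_inj_on_bounded_below:
  fixes T :: "'a::banach \<Rightarrow> 'b::banach"
  assumes T: "bounded_linear T" and S: "closed S" "subspace S" and R: "closed (T ` S)"
    and inj: "inj_on T S"
  shows "\<exists>c>0. \<forall>x\<in>S. c * norm x \<le> norm (T x)"
proof -
  obtain a where a: "a \<ge> 0"
    and approx: "\<And>y. y \<in> T ` S \<Longrightarrow> \<exists>x\<in>S. norm x \<le> a * norm y \<and> norm (y - T x) \<le> norm y / 2"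
    using closed_range_approximate_preimages[OF bounded_linear.linear[OF T] S(2) R] by blast
  have "norm x \<le> 2 * a * norm (T x)" if x: "x \<in> S" for x
  proof -
    obtain x' where "x' \<in> S" "norm x' \<le> 2 * a * norm (T x)" "T x' = T x"
      using exact_preimage_of_approximate_preimages[OF T S a approx imageI[OF x]] by blast
    then show ?thesis using inj x by (metis inj_onD)
  qed
  then show ?thesis using a
    by (intro exI[of _ "1 / (2 * a + 1)"]) (auto simp: field_simps, smt (verit) norm_ge_zero)
qed

lemma closed_range_complement_of_kernel:
  fixes H :: "'a::banach \<Rightarrow>\<^sub>L 'b::banach"
  assumes X0: "closed X0" "subspace X0" "X0 \<inter> {v. H v = 0} = {0}"
    and split: "\<forall>x. \<exists>y\<in>X0. \<exists>k\<in>{v. H v = 0}. x = y + k"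
    and range: "closed (range (blinfun_apply H))"
  obtains c C where "c > 0" "\<And>v. v \<in> X0 \<Longrightarrow> c * norm v \<le> norm (H v)"
    "\<And>z. \<exists>v k. v \<in> X0 \<and> H k = 0 \<and> z = v + k \<and> norm k \<le> C * norm z"
proof -
  have "range (blinfun_apply H) \<subseteq> blinfun_apply H ` X0"
  proof
    fix w assume "w \<in> range (blinfun_apply H)"
    then obtain x where w: "w = H x" by blast
    obtain y k where "y \<in> X0" "H k = 0" "x = y + k" using split by blast
    then show "w \<in> blinfun_apply H ` X0" using w by (simp add: blinfun.add_right)
  qed
  then have "blinfun_apply H ` X0 = range (blinfun_apply H)" by blast
  then have closed_image: "closed (blinfun_apply H ` X0)" using range by simp
  have "inj_on (blinfun_apply H) X0"
  proof (rule inj_onI)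
    fix a b assume "a \<in> X0" "b \<in> X0" "H a = H b"
    then have "a - b \<in> X0 \<inter> {v. H v = 0}" using X0(2) by (simp add: subspace_diff blinfun.diff_right)
    then show "a = b" using X0(3) by auto
  qed
  then obtain c where c: "c > 0" "\<And>v. v \<in> X0 \<Longrightarrow> c * norm v \<le> norm (H v)"
    using closed_range_inj_on_bounded_below[OF blinfun.bounded_linear_right X0(1,2) closed_image] by blast
  have "\<exists>v k. v \<in> X0 \<and> H k = 0 \<and> z = v + k \<and> norm k \<le> (1 + norm H / c) * norm z" for z
  proof -
    obtain v k where vk: "v \<in> X0" "H k = 0" "z = v + k" using split by blast
    then have "c * norm v \<le> norm H * norm z"
      using c(2)[OF vk(1)] norm_blinfun[of H z] by (simp add: blinfun.add_right)
    then have "norm v \<le> norm H / c * norm z" using c(1) by (simp add: field_simps)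
    moreover have "norm k \<le> norm z + norm v" using vk norm_triangle_ineq4[of z v] by simp
    ultimately show ?thesis using vk by (auto simp: algebra_simps)
  qed
  with c that show ?thesis by blast
qed

section \<open>Linearization estimates\<close>

lemma uniform_linearization:
  fixes f :: "'a::real_normed_vector \<Rightarrow> 'b::real_normed_vector" and f' :: "'a \<Rightarrow> 'a \<Rightarrow>\<^sub>L 'b"
  assumes S: "open S" and deriv: "\<And>x. x \<in> S \<Longrightarrow> (f has_derivative f' x) (at x)"
    and cont: "continuous_on S f'" and a: "a \<in> S" and \<epsilon>: "\<epsilon> > 0"
  obtains d where "d > 0" "ball a d \<subseteq> S"
    "\<And>x y. x \<in> ball a d \<Longrightarrow> y \<in> ball a d \<Longrightarrow> norm (f y - f x - f' a (y - x)) \<le> \<epsilon> * norm (y - x)"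
proof -
  obtain r0 where r0: "r0 > 0" "ball a r0 \<subseteq> S" using S a open_contains_ball by blast
  obtain r1 where r1: "r1 > 0" "\<And>x. x \<in> S \<Longrightarrow> dist x a < r1 \<Longrightarrow> dist (f' x) (f' a) < \<epsilon>"
    using cont a \<epsilon> unfolding continuous_on_iff by metis
  define d where "d = min r0 r1"
  have ball_S: "ball a d \<subseteq> S" using r0 by (auto simp: d_def)
  show ?thesis
  proof (rule that[of d])
    show "d > 0" "ball a d \<subseteq> S" using r0 r1 ball_S by (auto simp: d_def)
    fix x y assume x: "x \<in> ball a d" and y: "y \<in> ball a d"
    have "norm (f y - f x - f' a (y - x)) \<le> norm (y - x) * \<epsilon>"
    proof (rule differentiable_bound_linearization[where S="ball a d" and f'="\<lambda>z. blinfun_apply (f' z)"])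
      show "x + t *\<^sub>R (y - x) \<in> ball a d" if "t \<in> {0..1}" for t
      proof -
        have "x + t *\<^sub>R (y - x) = (1 - t) *\<^sub>R x + t *\<^sub>R y" by (simp add: algebra_simps)
        then show ?thesis using x y that convex_ball[of a d] unfolding convex_def by auto
      qed
      show "(f has_derivative f' z) (at z within ball a d)" if "z \<in> ball a d" for z
        using deriv that ball_S has_derivative_at_withinI by blast
      show "onorm (blinfun_apply (f' z) - blinfun_apply (f' a)) \<le> \<epsilon>" if "z \<in> ball a d" for z
      proof -
        have "dist (f' z) (f' a) < \<epsilon>" using r1(2)[of z] that ball_S by (auto simp: d_def dist_commute)
        then show ?thesis by (simp add: dist_norm norm_blinfun.rep_eq minus_blinfun.rep_eq fun_diff_def)
      qed
      show "a \<in> ball a d" using r0 r1 by (simp add: d_def)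
    qed
    then show "norm (f y - f x - f' a (y - x)) \<le> \<epsilon> * norm (y - x)" by (simp add: mult.commute)
  qed
qed

lemma has_derivative_left_inverse:
  assumes f: "(f has_derivative f') (at x)" and g: "(g has_derivative g') (at (f x))"
    and S: "open S" "x \<in> S" and inverse: "\<And>z. z \<in> S \<Longrightarrow> g (f z) = z"
  shows "g' (f' v) = v"
proof -
  have "((\<lambda>z. g (f z)) has_derivative (\<lambda>v. g' (f' v))) (at x)" by (rule has_derivative_compose[OF f g])
  then have "((\<lambda>z. z) has_derivative (\<lambda>v. g' (f' v))) (at x)"
    by (rule has_derivative_transform_within_open[OF _ S]) (use inverse in simp)
  then have "(\<lambda>v. g' (f' v)) = (\<lambda>v. v)" using has_derivative_ident has_derivative_unique by blast
  then show ?thesis by metis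
qed

lemma vector_derivative_in_closed_subspace:
  fixes f :: "real \<Rightarrow> 'a::real_normed_vector"
  assumes f: "(f has_vector_derivative v) (at 0)" and F: "closed F" "subspace F"
    and f_0: "f 0 \<in> F" and f_F: "\<forall>\<^sub>F t in at_right 0. f t \<in> F"
  shows "v \<in> F"
proof -
  have "(f has_derivative (\<lambda>t. t *\<^sub>R v)) (at 0 within {0<..})"
    using f by (simp add: has_vector_derivative_def has_derivative_at_withinI)
  then have "((\<lambda>t. (1 / norm (t - 0)) *\<^sub>R (f t - (f 0 + (t - 0) *\<^sub>R v))) \<longlongrightarrow> 0) (at_right 0)"
    unfolding has_derivative_within by simp
  moreover have "\<forall>\<^sub>F t in at_right 0. (1 / norm (t - 0)) *\<^sub>R (f t - (f 0 + (t - 0) *\<^sub>R v))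
      = (1 / t) *\<^sub>R (f t - f 0) - v"
    unfolding eventually_at_filter by (intro always_eventually allI impI) (simp add: algebra_simps)
  ultimately have "((\<lambda>t. (1 / t) *\<^sub>R (f t - f 0) - v) \<longlongrightarrow> 0) (at_right 0)"
    by (rule Lim_transform_eventually)
  then have quotient: "((\<lambda>t. (1 / t) *\<^sub>R (f t - f 0)) \<longlongrightarrow> v) (at_right 0)"
    by (simp add: LIM_zero_iff)
  have "\<forall>\<^sub>F t in at_right 0. (1 / t) *\<^sub>R (f t - f 0) \<in> F"
    using f_F by (rule eventually_mono) (use f_0 F(2) in \<open>simp add: subspace_diff subspace_scale\<close>)
  then show ?thesis by (rule Lim_in_closed_set[OF F(1) _ trivial_limit_at_right_real quotient])
qed

lemma energy_gap_quadratic: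
  fixes f :: "'a::real_normed_vector \<Rightarrow> 'b::real_normed_vector" and f' :: "'a \<Rightarrow> 'a \<Rightarrow>\<^sub>L 'b"
  assumes S: "convex S" and x: "x \<in> S" and p: "p \<in> S"
    and deriv: "\<And>q. q \<in> S \<Longrightarrow> (f has_derivative f' q) (at q)"
    and bound: "\<And>q. q \<in> S \<Longrightarrow> norm (f' q) \<le> L * norm (q - p)" and L: "L \<ge> 0"
  shows "norm (f x - f p) \<le> L * (norm (x - p))\<^sup>2"
proof -
  let ?T = "S \<inter> cball p (norm (x - p))"
  have "norm (f x - f p) \<le> (L * norm (x - p)) * norm (x - p)"
  proof (rule differentiable_bound[where S="?T"])
    show "convex ?T" using S by (simp add: convex_Int)
    show "(f has_derivative f' q) (at q within ?T)" if "q \<in> ?T" for q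
      using deriv that has_derivative_at_withinI by blast
    show "onorm (f' q) \<le> L * norm (x - p)" if q: "q \<in> ?T" for q
    proof -
      have "norm (f' q) \<le> L * norm (q - p)" using bound q by blast
      also have "\<dots> \<le> L * norm (x - p)"
        using q L by (intro mult_left_mono) (auto simp: dist_norm norm_minus_commute)
      finally show ?thesis by (simp add: norm_blinfun.rep_eq)
    qed
    show "x \<in> ?T" "p \<in> ?T" using x p by (auto simp: dist_norm norm_minus_commute)
  qed
  then show ?thesis by (simp add: power2_eq_square mult.assoc)
qed

lemma gradient_lower_bound:
  fixes H :: "'a::real_normed_vector \<Rightarrow>\<^sub>L 'b::real_normed_vector"
  assumes g: "norm (g - H (v + e)) \<le> \<eta> * norm (v + e)" and c: "c * norm v \<le> norm (H v)"
    and e: "norm e \<le> \<epsilon> * norm v" and \<eta>: "\<eta> \<ge> 0"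
  shows "(c - norm H * \<epsilon> - \<eta> * (1 + \<epsilon>)) * norm v \<le> norm g"
proof -
  have "norm (H e) \<le> norm H * (\<epsilon> * norm v)"
    using norm_blinfun[of H e] e by (meson mult_left_mono norm_ge_zero order_trans)
  moreover have "\<eta> * norm (v + e) \<le> \<eta> * (norm v + \<epsilon> * norm v)"
    using norm_triangle_ineq[of v e] e \<eta> by (intro mult_left_mono) auto
  moreover have "norm (H v) \<le> norm g + norm (g - H (v + e)) + norm (H e)"
  proof -
    have "norm (H v) = norm (g - (g - H (v + e)) - H e)" by (simp add: blinfun.add_right)
    then show ?thesis
      using norm_triangle_ineq4[of "g - (g - H (v + e))" "H e"] norm_triangle_ineq4[of g "g - H (v + e)"]
      by linarith
  qed
  ultimately show ?thesis using g c by (simp add: algebra_simps)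
qed

lemma lojasiewicz_parameters:
  fixes N c :: real
  assumes "0 \<le> N" "0 < c"
  shows "N * min 1 (c / (4 * (N + 1))) + 2 * (c / 8) \<le> c / 2"
proof -
  have "N * min 1 (c / (4 * (N + 1))) \<le> N * (c / (4 * (N + 1)))" using assms by (intro mult_left_mono) auto
  also have "\<dots> = c / 4 * (N / (N + 1))" by simp
  also have "\<dots> \<le> c / 4" using assms by (intro mult_left_le) auto
  finally show ?thesis by simp
qed

lemma scaled_sqrt_le:
  fixes d t K c g :: real
  assumes d: "\<bar>d\<bar> \<le> K * t\<^sup>2" and K: "0 \<le> K" and t: "0 \<le> t" and c: "0 \<le> c"
    and g: "c / 2 * t \<le> g"
  shows "c / (2 * (sqrt K + 1)) * \<bar>d\<bar> powr (1/2) \<le> g"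
proof -
  have pos: "sqrt K + 1 > 0" using K by (simp add: add_nonneg_pos)
  have "\<bar>d\<bar> powr (1/2) = sqrt \<bar>d\<bar>" by (simp add: powr_half_sqrt)
  also have "\<dots> \<le> sqrt (K * t\<^sup>2)" using d by (rule real_sqrt_le_mono)
  also have "\<dots> = sqrt K * t" using t by (simp add: real_sqrt_mult)
  also have "\<dots> \<le> (sqrt K + 1) * t" using t by (simp add: distrib_right)
  finally have "c / (2 * (sqrt K + 1)) * \<bar>d\<bar> powr (1/2) \<le> c / (2 * (sqrt K + 1)) * ((sqrt K + 1) * t)"
    using c pos by (intro mult_left_mono) simp_all
  also have "\<dots> = c / 2 * t" using pos by (simp add: field_simps)
  finally show ?thesis using g by linarith
qed

lemma lojasiewicz_half_near_critical_point:
  fixes E :: "'a::real_normed_vector \<Rightarrow> real" and E' :: "'a \<Rightarrow> 'a \<Rightarrow>\<^sub>L real"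
    and H :: "'a \<Rightarrow>\<^sub>L 'a \<Rightarrow>\<^sub>L real"
  assumes deriv: "\<And>q. q \<in> ball a d \<Longrightarrow> (E has_derivative E' q) (at q)"
    and lin: "\<And>q q'. q \<in> ball a d \<Longrightarrow> q' \<in> ball a d \<Longrightarrow>
                norm (E' q' - E' q - H (q' - q)) \<le> \<eta> * norm (q' - q)"
    and p: "p \<in> ball a d" "E' p = 0" and x: "x \<in> ball a d"
    and v: "c * norm v \<le> norm (H v)" "norm (x - p - v) \<le> \<epsilon> * norm v"
    and small: "0 \<le> \<eta>" "0 \<le> \<epsilon>" "\<epsilon> \<le> 1" "norm H * \<epsilon> + 2 * \<eta> \<le> c / 2"
  shows "c / (2 * (sqrt (4 * (norm H + \<eta>)) + 1)) * \<bar>E x - E p\<bar> powr (1/2) \<le> norm (E' x)"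
proof -
  have lin_p: "norm (E' q - H (q - p)) \<le> \<eta> * norm (q - p)" if "q \<in> ball a d" for q
    using lin[OF p(1) that] p(2) by simp
  have "norm H * \<epsilon> \<ge> 0" using small(2) by simp
  then have c: "c \<ge> 0" using small by linarith
  have "(c - norm H * \<epsilon> - \<eta> * (1 + \<epsilon>)) * norm v \<le> norm (E' x)"
    using gradient_lower_bound[of "E' x" H v "x - p - v" \<eta> c \<epsilon>] lin_p[OF x] v small(1) by simp
  moreover have "c / 2 \<le> c - norm H * \<epsilon> - \<eta> * (1 + \<epsilon>)"
    using small mult_left_le[of \<epsilon> \<eta>] by (simp add: algebra_simps)
  ultimately have gradient: "c / 2 * norm v \<le> norm (E' x)"
    by (meson mult_right_mono norm_ge_zero order_trans)
  have "norm (E x - E p) \<le> (norm H + \<eta>) * (norm (x - p))\<^sup>2"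
  proof (rule energy_gap_quadratic[OF convex_ball x p(1) deriv])
    show "norm (E' q) \<le> (norm H + \<eta>) * norm (q - p)" if "q \<in> ball a d" for q
      using lin_p[OF that] norm_blinfun[of H "q - p"] norm_triangle_sub[of "E' q" "H (q - p)"]
      by (simp add: algebra_simps)
    show "0 \<le> norm H + \<eta>" using small by simp
  qed
  then have "\<bar>E x - E p\<bar> \<le> (norm H + \<eta>) * (norm (x - p))\<^sup>2" by simp
  also have "\<dots> \<le> (norm H + \<eta>) * (2 * norm v)\<^sup>2"
  proof -
    have "norm (x - p) \<le> norm v + norm (x - p - v)" using norm_triangle_ineq[of v "x - p - v"] by simp
    then have "norm (x - p) \<le> 2 * norm v" using v(2) small mult_right_mono[of \<epsilon> 1 "norm v"] by simp
    then show ?thesis using small by (intro mult_left_mono power_mono) auto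
  qed
  also have "\<dots> = 4 * (norm H + \<eta>) * (norm v)\<^sup>2" by (simp add: power_mult_distrib)
  finally have energy: "\<bar>E x - E p\<bar> \<le> 4 * (norm H + \<eta>) * (norm v)\<^sup>2" .
  show ?thesis using small by (intro scaled_sqrt_le[OF energy _ norm_ge_zero c gradient]) simp
qed

section \<open>Derivatives of the encoded C^k classes\<close>

lemma mlin_norm_0: "mlin_norm 0 m = norm (m [])"
proof -
  have ball_0: "{hs. length hs = 0 \<and> (\<forall>h\<in>set hs. norm h \<le> 1)} = {[]}" by auto
  show ?thesis unfolding mlin_norm_def ball_0 by simp
qed

lemma mlin_bounded_diff:
  assumes "mlin_bounded k m1" "mlin_bounded k m2"
  shows "mlin_bounded k (\<lambda>hs. m1 hs - m2 hs)"
proof -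
  obtain C1 C2 where C1: "\<And>hs. length hs = k \<Longrightarrow> norm (m1 hs) \<le> C1 * prod_list (map norm hs)"
    and C2: "\<And>hs. length hs = k \<Longrightarrow> norm (m2 hs) \<le> C2 * prod_list (map norm hs)"
    using assms by (auto simp: mlin_bounded_def)
  have "norm (m1 hs - m2 hs) \<le> (C1 + C2) * prod_list (map norm hs)" if "length hs = k" for hs
    using norm_triangle_ineq4[of "m1 hs" "m2 hs"] C1[OF that] C2[OF that] by (simp add: distrib_right)
  moreover have "linear (\<lambda>v. m1 (hs[i := v]) - m2 (hs[i := v]))" if "i < k" "length hs = k" for i hs
    using assms that by (intro linear_compose_sub) (simp_all add: mlin_bounded_def)
  ultimately show ?thesis unfolding mlin_bounded_def by blast
qed

lemma mlin_bounded_1_imp_bounded_linear: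
  assumes "mlin_bounded 1 m"
  shows "bounded_linear (\<lambda>h. m [h])"
proof -
  have "\<forall>hs. length hs = 1 \<longrightarrow> linear (\<lambda>v. m (hs[0 := v]))" using assms by (simp add: mlin_bounded_def)
  from this[rule_format, of "[0]"] have lin: "linear (\<lambda>v. m [v])" by simp
  obtain C where C: "\<And>hs. length hs = 1 \<Longrightarrow> norm (m hs) \<le> C * prod_list (map norm hs)"
    using assms by (auto simp: mlin_bounded_def)
  have "norm (m [h]) \<le> norm h * C" for h using C[of "[h]"] by (simp add: mult.commute)
  then show ?thesis using lin by (intro bounded_linear_intro[where K=C]) (auto simp: linear_iff)
qed

lemma mlin_norm_1_bound:
  fixes m :: "'a::real_normed_vector list \<Rightarrow> 'b::real_normed_vector"
  assumes "mlin_bounded 1 m"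
  shows "norm (m [h]) \<le> mlin_norm 1 m * norm h" and "0 \<le> mlin_norm 1 m"
proof -
  let ?B = "{hs. length hs = 1 \<and> (\<forall>h\<in>set hs. norm h \<le> (1::real))} :: 'a list set"
  obtain C where C: "\<And>hs. length hs = 1 \<Longrightarrow> norm (m hs) \<le> C * prod_list (map norm hs)"
    using assms by (auto simp: mlin_bounded_def)
  have "bdd_above ((\<lambda>hs. norm (m hs)) ` ?B)"
  proof (rule bdd_aboveI2)
    fix hs assume "hs \<in> ?B"
    then obtain h where h: "hs = [h]" "norm h \<le> 1" by (auto simp: length_Suc_conv)
    then have "norm (m hs) \<le> C * norm h" using C[of hs] by simp
    also have "\<dots> \<le> \<bar>C\<bar>" using h(2) by (metis abs_ge_self abs_ge_zero mult_left_le mult_right_mono norm_ge_zero order_trans)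
    finally show "norm (m hs) \<le> \<bar>C\<bar>" .
  qed
  then have upper: "norm (m hs) \<le> mlin_norm 1 m" if "hs \<in> ?B" for hs
    unfolding mlin_norm_def by (rule cSUP_upper[OF that])
  show "0 \<le> mlin_norm 1 m" using upper[of "[0]"] by (simp add: order_trans[OF norm_ge_zero])
  interpret m: bounded_linear "\<lambda>h. m [h]" by (rule mlin_bounded_1_imp_bounded_linear[OF assms])
  show "norm (m [h]) \<le> mlin_norm 1 m * norm h"
  proof (cases "h = 0")
    case True then show ?thesis using m.zero by simp
  next
    case False
    then have "norm (m [(1 / norm h) *\<^sub>R h]) \<le> mlin_norm 1 m" by (intro upper) simp
    moreover have "norm (m [(1 / norm h) *\<^sub>R h]) = norm (m [h]) / norm h" using m.scaleR by simp
    ultimately show ?thesis using False by (simp add: divide_le_eq)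
  qed
qed

lemma Ck_on_1_imp_continuous_derivative:
  assumes "Ck_on 1 V f" "open V"
  obtains f' :: "'a \<Rightarrow> 'a::real_normed_vector \<Rightarrow>\<^sub>L 'b::real_normed_vector" where
    "\<And>x. x \<in> V \<Longrightarrow> (f has_derivative f' x) (at x)" "continuous_on V f'"
proof -
  obtain D :: "nat \<Rightarrow> 'a \<Rightarrow> 'a list \<Rightarrow> 'b" where D:
    "(\<forall>x\<in>V. D 0 x [] = f x) \<and>
     (\<forall>j\<le>1. \<forall>x\<in>V. mlin_bounded j (D j x)) \<and>
     (\<forall>j<1. \<forall>x\<in>V. ((\<lambda>y. mlin_norm j (\<lambda>hs. D j y hs - D j x hs - D (Suc j) x ((y - x) # hs)) / norm (y - x))
              \<longlongrightarrow> 0) (at x within V)) \<and>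
     (\<forall>j\<le>1. \<forall>x\<in>V. ((\<lambda>y. mlin_norm j (\<lambda>hs. D j y hs - D j x hs)) \<longlongrightarrow> 0) (at x within V))"
    using assms(1) unfolding Ck_on_def by (elim exE)
  note D0 = D[THEN conjunct1] and D_bounded = D[THEN conjunct2, THEN conjunct1]
    and D_deriv = D[THEN conjunct2, THEN conjunct2, THEN conjunct1]
    and D_cont = D[THEN conjunct2, THEN conjunct2, THEN conjunct2]
  have D1: "mlin_bounded 1 (D 1 x)" if "x \<in> V" for x using D_bounded that by simp
  define f' where "f' x = Blinfun (\<lambda>h. D 1 x [h])" for x
  have f'_apply: "blinfun_apply (f' x) = (\<lambda>h. D 1 x [h])" if "x \<in> V" for x
    unfolding f'_def using mlin_bounded_1_imp_bounded_linear[OF D1[OF that]] by (rule bounded_linear_Blinfun_apply)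
  show ?thesis
  proof (rule that[of f'])
    fix x assume x: "x \<in> V"
    have "((\<lambda>y. norm (D 0 y [] - D 0 x [] - D 1 x [y - x]) / norm (y - x)) \<longlongrightarrow> 0) (at x within V)"
      using D_deriv x by (simp add: mlin_norm_0)
    moreover have "\<forall>\<^sub>F y in at x within V. norm (D 0 y [] - D 0 x [] - D 1 x [y - x]) / norm (y - x)
          = norm ((1 / norm (y - x)) *\<^sub>R (f y - (f x + f' x (y - x))))"
      unfolding eventually_at_filter using D0 x f'_apply[OF x]
      by (intro always_eventually allI impI) (simp add: diff_diff_add divide_inverse mult.commute)
    ultimately have "((\<lambda>y. (1 / norm (y - x)) *\<^sub>R (f y - (f x + f' x (y - x)))) \<longlongrightarrow> 0) (at x within V)"
      by (rule tendsto_norm_zero_cancel[OF Lim_transform_eventually])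
    then have "(f has_derivative f' x) (at x within V)"
      by (simp add: has_derivative_within blinfun.bounded_linear_right)
    then show "(f has_derivative f' x) (at x)" using at_within_open[OF x assms(2)] by simp
  next
    show "continuous_on V f'"
      unfolding continuous_on_def
    proof
      fix x assume x: "x \<in> V"
      have "\<forall>\<^sub>F y in at x within V. norm (f' y - f' x) \<le> mlin_norm 1 (\<lambda>hs. D 1 y hs - D 1 x hs)"
        unfolding eventually_at_filter
      proof (intro always_eventually allI impI)
        fix y assume "y \<noteq> x" and y: "y \<in> V"
        have D1_diff: "mlin_bounded 1 (\<lambda>hs. D 1 y hs - D 1 x hs)" by (rule mlin_bounded_diff[OF D1[OF y] D1[OF x]])
        show "norm (f' y - f' x) \<le> mlin_norm 1 (\<lambda>hs. D 1 y hs - D 1 x hs)"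
          using mlin_norm_1_bound[OF D1_diff] f'_apply[OF x] f'_apply[OF y]
          by (intro norm_blinfun_bound) (simp_all add: minus_blinfun.rep_eq)
      qed
      moreover have "((\<lambda>y. mlin_norm 1 (\<lambda>hs. D 1 y hs - D 1 x hs)) \<longlongrightarrow> 0) (at x within V)"
        using D_cont x by simp
      ultimately have "((\<lambda>y. f' y - f' x) \<longlongrightarrow> 0) (at x within V)" by (rule Lim_null_comparison)
      then show "(f' \<longlongrightarrow> f' x) (at x within V)" by (rule LIM_zero_cancel)
    qed
  qed
qed

section \<open>Charts of the critical manifold\<close>

locale C1_chart =
  fixes M V W F :: "'a::banach set" and \<phi> \<psi> :: "'a \<Rightarrow> 'a" and D\<phi> D\<psi> :: "'a \<Rightarrow> 'a \<Rightarrow>\<^sub>L 'a"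
  assumes open_V: "open V" and open_W: "open W"
    and closed_F: "closed F" and subspace_F: "subspace F"
    and \<phi>_V: "\<phi> ` V = W" and \<phi>_M: "\<phi> ` (V \<inter> M) = W \<inter> F"
    and \<psi>_\<phi>: "\<And>x. x \<in> V \<Longrightarrow> \<psi> (\<phi> x) = x" and \<phi>_\<psi>: "\<And>y. y \<in> W \<Longrightarrow> \<phi> (\<psi> y) = y"
    and \<phi>_deriv: "\<And>x. x \<in> V \<Longrightarrow> (\<phi> has_derivative D\<phi> x) (at x)"
    and \<psi>_deriv: "\<And>y. y \<in> W \<Longrightarrow> (\<psi> has_derivative D\<psi> y) (at y)"
    and D\<psi>_cont: "continuous_on W D\<psi>"
begin

lemma \<phi>_in_F: "x \<in> V \<inter> M \<Longrightarrow> \<phi> x \<in> W \<inter> F"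
  using \<phi>_M by blast

lemma \<psi>_M:
  assumes "y \<in> W \<inter> F"
  shows "\<psi> y \<in> V \<inter> M"
proof -
  obtain x where "x \<in> V \<inter> M" "y = \<phi> x" using assms \<phi>_M by (metis imageE)
  then show ?thesis using \<psi>_\<phi> by simp
qed

lemma D\<psi>_D\<phi>:
  assumes x: "x \<in> V"
  shows "D\<psi> (\<phi> x) (D\<phi> x v) = v"
proof -
  have "\<phi> x \<in> W" using x \<phi>_V by blast
  then show ?thesis by (rule has_derivative_left_inverse[OF \<phi>_deriv[OF x] \<psi>_deriv open_V x \<psi>_\<phi>])
qed

lemma D\<phi>_D\<psi>:
  assumes x: "x \<in> V"
  shows "D\<phi> x (D\<psi> (\<phi> x) v) = v"
proof -
  have y: "\<phi> x \<in> W" using x \<phi>_V by blast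
  have "(\<phi> has_derivative D\<phi> x) (at (\<psi> (\<phi> x)))" using \<phi>_deriv[OF x] \<psi>_\<phi>[OF x] by simp
  then show ?thesis by (rule has_derivative_left_inverse[OF \<psi>_deriv[OF y] _ open_W y \<phi>_\<psi>])
qed

lemma D\<phi>_tangent_space:
  assumes p: "p \<in> V" and v: "v \<in> tangent_space M p"
  shows "D\<phi> p v \<in> F"
proof -
  obtain \<gamma> :: "real \<Rightarrow> 'a" and \<epsilon> where \<gamma>: "\<epsilon> > 0" "\<gamma> ` {-\<epsilon><..<\<epsilon>} \<subseteq> M" "\<gamma> 0 = p"
    "(\<gamma> has_vector_derivative v) (at 0)"
    using v unfolding tangent_space_def by blast
  have "0 \<in> {-\<epsilon><..<\<epsilon>}" using \<gamma>(1) by simp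
  then have "p \<in> V \<inter> M" using \<gamma>(2,3) p by blast
  then have \<phi>_p: "\<phi> p \<in> F" using \<phi>_in_F by blast
  have "((\<lambda>t. \<phi> (\<gamma> t)) has_derivative (\<lambda>t. D\<phi> p (t *\<^sub>R v))) (at 0)"
    using has_derivative_compose[of \<gamma> "\<lambda>t. t *\<^sub>R v" 0 UNIV \<phi> "D\<phi> p"] \<gamma>(3,4) \<phi>_deriv[OF p]
    by (simp add: has_vector_derivative_def)
  then have deriv: "((\<lambda>t. \<phi> (\<gamma> t)) has_vector_derivative D\<phi> p v) (at 0)"
    by (simp add: has_vector_derivative_def blinfun.scaleR_right)
  have "continuous (at 0) \<gamma>" using \<gamma>(4) has_vector_derivative_continuous by blast
  then have "\<forall>\<^sub>F t in at 0. \<gamma> t \<in> V"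
    using open_V p \<gamma>(3) unfolding continuous_at by (metis tendsto_def)
  moreover have "\<forall>\<^sub>F t in at (0::real). t \<in> {-\<epsilon><..<\<epsilon>}"
    using \<gamma>(1) by (intro eventually_at_in_open') auto
  ultimately have "\<forall>\<^sub>F t in at (0::real). \<gamma> t \<in> V \<and> t \<in> {-\<epsilon><..<\<epsilon>}"
    by (rule eventually_conj)
  then have "\<forall>\<^sub>F t in at_right (0::real). \<gamma> t \<in> V \<and> t \<in> {-\<epsilon><..<\<epsilon>}"
    using eventually_at_split by blast
  then have near_0: "\<forall>\<^sub>F t in at_right 0. \<phi> (\<gamma> t) \<in> F"
  proof (rule eventually_mono)
    fix t assume "\<gamma> t \<in> V \<and> t \<in> {-\<epsilon><..<\<epsilon>}"
    then have "\<gamma> t \<in> V \<inter> M" using \<gamma>(2) by blast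
    then show "\<phi> (\<gamma> t) \<in> F" using \<phi>_in_F by blast
  qed
  show ?thesis
    using vector_derivative_in_closed_subspace[OF deriv closed_F subspace_F _ near_0] \<phi>_p \<gamma>(3) by simp
qed

lemma locally_constant_on_M:
  fixes f :: "'a \<Rightarrow> 'b::real_normed_vector"
  assumes p: "p \<in> V \<inter> M" and f: "\<And>q. q \<in> M \<Longrightarrow> (f has_derivative (\<lambda>_. 0)) (at q)"
  obtains r where "r > 0" "\<And>q. q \<in> M \<inter> ball p r \<Longrightarrow> f q = f p"
proof -
  have \<phi>_p: "\<phi> p \<in> W \<inter> F" using p by (rule \<phi>_in_F)
  then obtain d where d: "d > 0" "ball (\<phi> p) d \<subseteq> W" using open_W open_contains_ball by blast
  have "\<exists>C. \<forall>y\<in>ball (\<phi> p) d \<inter> F. f (\<psi> y) = C"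
  proof (rule has_derivative_zero_constant)
    show "convex (ball (\<phi> p) d \<inter> F)" using subspace_F by (simp add: convex_Int subspace_imp_convex)
    fix y assume "y \<in> ball (\<phi> p) d \<inter> F"
    then have y: "y \<in> W \<inter> F" using d by blast
    then have "\<psi> y \<in> M" using \<psi>_M by blast
    then have "((\<lambda>y. f (\<psi> y)) has_derivative (\<lambda>h. 0)) (at y)"
      using has_derivative_compose[OF \<psi>_deriv f] y by blast
    then show "((\<lambda>y. f (\<psi> y)) has_derivative (\<lambda>h. 0)) (at y within ball (\<phi> p) d \<inter> F)"
      by (rule has_derivative_at_withinI)
  qed
  then obtain C where C: "\<And>y. y \<in> ball (\<phi> p) d \<inter> F \<Longrightarrow> f (\<psi> y) = C" by blast
  have "f p = C" using C[of "\<phi> p"] \<phi>_p d(1) \<psi>_\<phi> p by simp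
  have "continuous (at p) \<phi>" using \<phi>_deriv p has_derivative_continuous by blast
  then obtain r1 where r1: "r1 > 0" "\<And>q. dist q p < r1 \<Longrightarrow> dist (\<phi> q) (\<phi> p) < d"
    using d(1) unfolding continuous_at_eps_delta by metis
  obtain r2 where r2: "r2 > 0" "ball p r2 \<subseteq> V" using open_V p open_contains_ball by blast
  show ?thesis
  proof (rule that[of "min r1 r2"])
    show "min r1 r2 > 0" using r1 r2 by simp
    fix q assume q: "q \<in> M \<inter> ball p (min r1 r2)"
    then have "q \<in> V \<inter> M" using r2 by (auto simp: dist_commute)
    then have "\<phi> q \<in> ball (\<phi> p) d \<inter> F" using \<phi>_in_F r1(2)[of q] q by (auto simp: dist_commute)
    then show "f q = f p" using C \<open>f p = C\<close> \<psi>_\<phi> \<open>q \<in> V \<inter> M\<close> by force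
  qed
qed

text \<open>
  Pushing the decomposition v + k of the chart displacement forward: the tangent part k moves
  along the flat piece W \<inter> F, hence within M, and what is left of x is v up to the
  linearization error of \<psi>.
\<close>

lemma chart_splitting:
  assumes p: "p \<in> V \<inter> M" and x: "x \<in> V" and d: "ball (\<phi> p) d \<subseteq> W"
    and lin: "\<And>y y'. y \<in> ball (\<phi> p) d \<Longrightarrow> y' \<in> ball (\<phi> p) d \<Longrightarrow>
                norm (\<psi> y' - \<psi> y - D\<psi> (\<phi> p) (y' - y)) \<le> \<eta> * norm (y' - y)"
    and split: "D\<psi> (\<phi> p) (\<phi> x - \<phi> p) = v + k" and k: "k \<in> tangent_space M p"
    and small: "norm (D\<phi> p k) < d" "norm (\<phi> x - \<phi> p) < d"
  shows "\<psi> (\<phi> p + D\<phi> p k) \<in> M" "norm (x - \<psi> (\<phi> p + D\<phi> p k) - v) \<le> \<eta> * norm (D\<phi> p v)"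
proof -
  let ?q = "\<phi> p + D\<phi> p k"
  have "D\<phi> p (D\<psi> (\<phi> p) (\<phi> x - \<phi> p)) = \<phi> x - \<phi> p" using D\<phi>_D\<psi> p by simp
  then have x_q: "\<phi> x = ?q + D\<phi> p v" using split by (simp add: blinfun.add_right algebra_simps)
  have q_ball: "?q \<in> ball (\<phi> p) d" using small(1) by (simp add: dist_norm)
  have "D\<phi> p k \<in> F" using D\<phi>_tangent_space p k by simp
  then have "?q \<in> W \<inter> F" using q_ball d \<phi>_in_F[OF p] subspace_F by (auto simp: subspace_add)
  then show "\<psi> ?q \<in> M" using \<psi>_M by blast
  have x_ball: "\<phi> x \<in> ball (\<phi> p) d" using small(2) by (simp add: dist_norm norm_minus_commute)
  have "D\<psi> (\<phi> p) (\<phi> x - ?q) = v" using D\<psi>_D\<phi> p x_q by simp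
  then have "x - \<psi> ?q - v = \<psi> (\<phi> x) - \<psi> ?q - D\<psi> (\<phi> p) (\<phi> x - ?q)" using \<psi>_\<phi> x by simp
  also have "norm \<dots> \<le> \<eta> * norm (D\<phi> p v)" using lin[OF q_ball x_ball] x_q by simp
  finally show "norm (x - \<psi> ?q - v) \<le> \<eta> * norm (D\<phi> p v)" .
qed

lemma approximation_near_M:
  assumes p: "p \<in> V \<inter> M" and \<epsilon>: "\<epsilon> > 0" and r: "r > 0"
    and split: "\<And>z. \<exists>v k. v \<in> X0 \<and> k \<in> tangent_space M p \<and> z = v + k \<and> norm k \<le> C * norm z"
  obtains \<sigma> where "\<sigma> > 0"
    "\<And>x. x \<in> ball p \<sigma> \<Longrightarrow> \<exists>q v. q \<in> M \<inter> ball p r \<and> v \<in> X0 \<and> norm (x - q - v) \<le> \<epsilon> * norm v"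
proof -
  define A where "A = D\<phi> p"
  define B where "B = D\<psi> (\<phi> p)"
  have \<phi>_p: "\<phi> p \<in> W \<inter> F" using p by (rule \<phi>_in_F)
  define \<eta> where "\<eta> = \<epsilon> / (norm A + 1)"
  have A1: "norm A + 1 > 0" using norm_ge_zero[of A] by linarith
  have "\<eta> * norm A = \<epsilon> * (norm A / (norm A + 1))" by (simp add: \<eta>_def)
  also have "\<dots> \<le> \<epsilon> * 1" using \<epsilon> A1 by (intro mult_left_mono) simp_all
  finally have \<eta>: "\<eta> > 0" "\<eta> * norm A \<le> \<epsilon>" using \<epsilon> A1 by (simp_all add: \<eta>_def)
  obtain d where d: "d > 0" "ball (\<phi> p) d \<subseteq> W"
    and lin: "\<And>y y'. y \<in> ball (\<phi> p) d \<Longrightarrow> y' \<in> ball (\<phi> p) d \<Longrightarrow>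
                norm (\<psi> y' - \<psi> y - D\<psi> (\<phi> p) (y' - y)) \<le> \<eta> * norm (y' - y)"
    using uniform_linearization[OF open_W \<psi>_deriv D\<psi>_cont _ \<eta>(1), of "\<phi> p"] \<phi>_p by blast
  have "continuous (at (\<phi> p)) \<psi>" using \<psi>_deriv \<phi>_p has_derivative_continuous by blast
  moreover have "\<psi> (\<phi> p) = p" using \<psi>_\<phi> p by blast
  ultimately obtain r1 where r1: "r1 > 0" "\<And>y. dist y (\<phi> p) < r1 \<Longrightarrow> dist (\<psi> y) p < r"
    using r unfolding continuous_at_eps_delta by metis
  define \<rho> where "\<rho> = min d r1"
  define K where "K = norm A * \<bar>C\<bar> * norm B + 1"
  have K: "K \<ge> 1" by (simp add: K_def)
  have "\<rho> > 0" using d r1 by (simp add: \<rho>_def)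
  have "continuous (at p) \<phi>" using \<phi>_deriv p has_derivative_continuous by blast
  moreover have \<rho>: "\<rho> / K > 0" "\<rho> / K \<le> \<rho>"
    using \<open>\<rho> > 0\<close> K by (simp_all add: pos_divide_le_eq mult_le_cancel_left1)
  ultimately obtain r2 where r2: "r2 > 0" "\<And>x. dist x p < r2 \<Longrightarrow> dist (\<phi> x) (\<phi> p) < \<rho> / K"
    unfolding continuous_at_eps_delta by metis
  obtain r3 where r3: "r3 > 0" "ball p r3 \<subseteq> V" using open_V p open_contains_ball by blast
  show ?thesis
  proof (rule that[of "min r2 r3"])
    show "min r2 r3 > 0" using r2 r3 by simp
    fix x assume x: "x \<in> ball p (min r2 r3)"
    have x_V: "x \<in> V" using x r3 by auto
    have x_near: "norm (\<phi> x - \<phi> p) < \<rho> / K" using x r2(2)[of x] by (simp add: dist_norm norm_minus_commute)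
    obtain v k where vk: "v \<in> X0" "k \<in> tangent_space M p" "B (\<phi> x - \<phi> p) = v + k"
      and k: "norm k \<le> C * norm (B (\<phi> x - \<phi> p))"
      using split by metis
    have "norm (A k) \<le> norm A * (\<bar>C\<bar> * (norm B * norm (\<phi> x - \<phi> p)))"
    proof -
      have "norm k \<le> \<bar>C\<bar> * (norm B * norm (\<phi> x - \<phi> p))"
        using k norm_blinfun[of B "\<phi> x - \<phi> p"] abs_ge_self[of C]
        by (meson abs_ge_zero mult_mono norm_ge_zero order_trans)
      then show ?thesis using norm_blinfun[of A k] by (meson mult_left_mono norm_ge_zero order_trans)
    qed
    also have "\<dots> \<le> K * norm (\<phi> x - \<phi> p)" by (simp add: K_def algebra_simps)
    also have "\<dots> < \<rho>" using x_near K by (simp add: field_simps)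
    finally have "norm (A k) < d" "dist (\<psi> (\<phi> p + A k)) p < r"
      using r1(2)[of "\<phi> p + A k"] by (simp_all add: \<rho>_def dist_norm)
    moreover have "norm (\<phi> x - \<phi> p) < d" using x_near \<rho>(2) by (simp add: \<rho>_def)
    ultimately have q: "\<psi> (\<phi> p + A k) \<in> M \<inter> ball p r" "norm (x - \<psi> (\<phi> p + A k) - v) \<le> \<eta> * norm (A v)"
      using chart_splitting[OF p x_V d(2) lin vk(3)[unfolded B_def] vk(2)]
      by (simp_all add: A_def dist_commute)
    have "\<eta> * norm (A v) \<le> \<eta> * (norm A * norm v)" using \<eta> norm_blinfun[of A v] by (simp add: mult_left_mono)
    also have "\<dots> \<le> \<epsilon> * norm v" using \<eta> by (simp add: mult.assoc[symmetric] mult_right_mono)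
    finally have "norm (x - \<psi> (\<phi> p + A k) - v) \<le> \<epsilon> * norm v" using q(2) by linarith
    then show "\<exists>q v. q \<in> M \<inter> ball p r \<and> v \<in> X0 \<and> norm (x - q - v) \<le> \<epsilon> * norm v"
      using q(1) vk(1) by blast
  qed
qed

end

lemma smooth_submanifold_C1_chart:
  assumes "smooth_submanifold M" "p \<in> M"
  obtains V W F \<phi> \<psi> D\<phi> D\<psi> where "p \<in> V" "C1_chart M V W F \<phi> \<psi> D\<phi> D\<psi>"
proof -
  have "\<exists>V W (\<phi>::'a \<Rightarrow> 'a) \<psi> F. open V \<and> p \<in> V \<and> open W \<and> closed F \<and> subspace F \<and>
      \<phi> ` V = W \<and> (\<forall>x\<in>V. \<psi> (\<phi> x) = x) \<and> (\<forall>y\<in>W. \<phi> (\<psi> y) = y) \<and>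
      smooth_on V \<phi> \<and> smooth_on W \<psi> \<and> \<phi> ` (V \<inter> M) = W \<inter> F"
    using assms unfolding smooth_submanifold_def by (rule bspec)
  then obtain V W F and \<phi> \<psi> :: "'a \<Rightarrow> 'a" where chart: "open V" "p \<in> V" "open W" "closed F" "subspace F"
      "\<phi> ` V = W" "\<forall>x\<in>V. \<psi> (\<phi> x) = x" "\<forall>y\<in>W. \<phi> (\<psi> y) = y"
      "smooth_on V \<phi>" "smooth_on W \<psi>" "\<phi> ` (V \<inter> M) = W \<inter> F"
    by blast
  obtain D\<phi> :: "'a \<Rightarrow> 'a \<Rightarrow>\<^sub>L 'a" where D\<phi>: "\<And>x. x \<in> V \<Longrightarrow> (\<phi> has_derivative D\<phi> x) (at x)"
    using Ck_on_1_imp_continuous_derivative[OF _ chart(1)] chart(9) unfolding smooth_on_def by metis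
  obtain D\<psi> :: "'a \<Rightarrow> 'a \<Rightarrow>\<^sub>L 'a"
    where D\<psi>: "\<And>y. y \<in> W \<Longrightarrow> (\<psi> has_derivative D\<psi> y) (at y)" "continuous_on W D\<psi>"
    using Ck_on_1_imp_continuous_derivative[OF _ chart(3)] chart(10) unfolding smooth_on_def by metis
  have "C1_chart M V W F \<phi> \<psi> D\<phi> D\<psi>"
    using chart D\<phi> D\<psi> by unfold_locales auto
  then show ?thesis using that chart(2) by blast
qed

lemma morse_bott_at_C1_chart:
  assumes "morse_bott_at U E' E'' x0" "x0 \<in> U" "E' x0 = 0"
  obtains M V W F \<phi> \<psi> D\<phi> D\<psi> where "x0 \<in> V \<inter> M" "C1_chart M V W F \<phi> \<psi> D\<phi> D\<psi>"
    "M \<subseteq> Crit U E'" "tangent_space M x0 = {v. E'' x0 v = 0}"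
proof -
  obtain V0 where V0: "x0 \<in> V0" "smooth_submanifold (V0 \<inter> Crit U E')"
    and tangent: "tangent_space (V0 \<inter> Crit U E') x0 = {v. E'' x0 v = 0}"
    using assms(1) unfolding morse_bott_at_def by blast
  have x0: "x0 \<in> V0 \<inter> Crit U E'" using V0(1) assms(2,3) by (simp add: Crit_def)
  then obtain V W F \<phi> \<psi> D\<phi> D\<psi> where "x0 \<in> V" "C1_chart (V0 \<inter> Crit U E') V W F \<phi> \<psi> D\<phi> D\<psi>"
    using smooth_submanifold_C1_chart[OF V0(2)] by blast
  then show ?thesis using that[of V "V0 \<inter> Crit U E'"] x0 tangent by blast
qed

theorem corollary5:
  fixes U :: "'a::banach set"
    and E :: "'a \<Rightarrow> real"
    and E' :: "'a \<Rightarrow> ('a \<Rightarrow>\<^sub>L real)"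
    and E'' :: "'a \<Rightarrow> ('a \<Rightarrow>\<^sub>L ('a \<Rightarrow>\<^sub>L real))"
    and x_inf :: 'a
  assumes U_open: "open U"
    and E'_deriv: "\<forall>x\<in>U. (E has_derivative blinfun_apply (E' x)) (at x)"
    and E''_deriv: "\<forall>x\<in>U. (E' has_derivative blinfun_apply (E'' x)) (at x)"
    and E''_cont: "continuous_on U E''"
    and x_in: "x_inf \<in> U"
    and crit: "E' x_inf = 0"
    and MB: "morse_bott_at U E' E'' x_inf"
    and compl: "\<exists>X0. closed X0 \<and> subspace X0 \<and> X0 \<inter> {v. E'' x_inf v = 0} = {0} \<and>
                  (\<forall>x. \<exists>y\<in>X0. \<exists>k\<in>{v. E'' x_inf v = 0}. x = y + k)"
    and ran_closed: "closed (range (blinfun_apply (E'' x_inf)))"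
  shows "\<exists>Z \<sigma>. 0 < Z \<and> 0 < \<sigma> \<and> \<sigma> \<le> 1 \<and>
           (\<forall>x\<in>U. norm (x - x_inf) < \<sigma> \<longrightarrow>
              norm (E' x) \<ge> Z * \<bar>E x - E x_inf\<bar> powr (1/2))"
proof -
  let ?H = "E'' x_inf"
  obtain M V W F \<phi> \<psi> D\<phi> D\<psi> where x_M: "x_inf \<in> V \<inter> M" and chart: "C1_chart M V W F \<phi> \<psi> D\<phi> D\<psi>"
    and M_Crit: "M \<subseteq> Crit U E'" and tangent: "tangent_space M x_inf = {v. ?H v = 0}"
    by (rule morse_bott_at_C1_chart[OF MB x_in crit])
  have M_crit: "q \<in> U \<and> E' q = 0" if "q \<in> M" for q using that M_Crit by (auto simp: Crit_def)
  obtain X0 where X0: "closed X0" "subspace X0" "X0 \<inter> {v. ?H v = 0} = {0}"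
    "\<forall>x. \<exists>y\<in>X0. \<exists>k\<in>{v. ?H v = 0}. x = y + k"
    using compl by blast
  obtain c C where c: "c > 0" "\<And>v. v \<in> X0 \<Longrightarrow> c * norm v \<le> norm (?H v)"
    and split: "\<And>z. \<exists>v k. v \<in> X0 \<and> ?H k = 0 \<and> z = v + k \<and> norm k \<le> C * norm z"
    using closed_range_complement_of_kernel[OF X0 ran_closed] by blast
  define \<eta> where "\<eta> = c / 8"
  define \<epsilon> where "\<epsilon> = min 1 (c / (4 * (norm ?H + 1)))"
  have small: "0 < \<eta>" "0 < \<epsilon>" "\<epsilon> \<le> 1" "norm ?H * \<epsilon> + 2 * \<eta> \<le> c / 2"
    using c(1) lojasiewicz_parameters[of "norm ?H" c] by (simp_all add: \<eta>_def \<epsilon>_def add_nonneg_pos)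
  have E'_deriv_E'': "\<And>q. q \<in> U \<Longrightarrow> (E' has_derivative E'' q) (at q)" using E''_deriv by blast
  obtain d where d: "d > 0" "ball x_inf d \<subseteq> U" and lin: "\<And>q q'. q \<in> ball x_inf d \<Longrightarrow> q' \<in> ball x_inf d \<Longrightarrow>
      norm (E' q' - E' q - ?H (q' - q)) \<le> \<eta> * norm (q' - q)"
    using uniform_linearization[OF U_open E'_deriv_E'' E''_cont x_in small(1)] by blast
  have E_flat: "(E has_derivative (\<lambda>_. 0)) (at q)" if q: "q \<in> M" for q
  proof -
    have "blinfun_apply (E' q) = (\<lambda>_. 0)" using M_crit[OF q] by auto
    then show ?thesis using E'_deriv M_crit[OF q] by metis
  qed
  obtain r where r: "r > 0" "\<And>q. q \<in> M \<inter> ball x_inf r \<Longrightarrow> E q = E x_inf"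
    using C1_chart.locally_constant_on_M[OF chart x_M E_flat] by blast
  have split_tangent: "\<And>z. \<exists>v k. v \<in> X0 \<and> k \<in> tangent_space M x_inf \<and> z = v + k \<and> norm k \<le> C * norm z"
    using split tangent by simp
  have "min r d > 0" using r(1) d(1) by simp
  then obtain \<sigma> where \<sigma>: "\<sigma> > 0" and near: "\<And>x. x \<in> ball x_inf \<sigma> \<Longrightarrow>
      \<exists>q v. q \<in> M \<inter> ball x_inf (min r d) \<and> v \<in> X0 \<and> norm (x - q - v) \<le> \<epsilon> * norm v"
    using C1_chart.approximation_near_M[OF chart x_M small(2) _ split_tangent] by blast
  define Z where "Z = c / (2 * (sqrt (4 * (norm ?H + \<eta>)) + 1))"
  have estimate: "Z * \<bar>E x - E x_inf\<bar> powr (1/2) \<le> norm (E' x)" if x: "norm (x - x_inf) < min \<sigma> d" for x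
  proof -
    obtain q v where q: "q \<in> M \<inter> ball x_inf (min r d)" "v \<in> X0" "norm (x - q - v) \<le> \<epsilon> * norm v"
      using near[of x] x by (auto simp: dist_norm norm_minus_commute)
    then have q_crit: "q \<in> ball x_inf d" "E' q = 0" "E q = E x_inf" using r(2) M_crit by auto
    have x_ball: "x \<in> ball x_inf d" using x by (simp add: dist_norm norm_minus_commute)
    have "Z * \<bar>E x - E q\<bar> powr (1/2) \<le> norm (E' x)"
      unfolding Z_def
      by (rule lojasiewicz_half_near_critical_point[OF _ lin q_crit(1,2) x_ball c(2)[OF q(2)] q(3)])
        (use E'_deriv d(2) small in auto)
    then show ?thesis using q_crit(3) by simp
  qed
  have "Z > 0" unfolding Z_def using c(1) small(1) by (simp add: add_nonneg_pos)
  show ?thesis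
    by (rule exI[of _ Z], rule exI[of _ "min 1 (min \<sigma> d)"]) (use \<open>Z > 0\<close> \<sigma> d(1) estimate in auto)
qed

end
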